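(* Let $P$ be a poset and $v$ an assignment of variables to elements of $P$. Then for all $n\in\omega$ and $1\leq k,r,s<\omega$: $P,v\models\phi_{krsn}(x_1,\ldots,x_k,y)$ if and only if $\exists$ has an $n$-strategy for the $(\alpha,\beta)$-game with starting position $(\{v(x_1),\ldots,v(x_k)\},\{v(y)\})$ for all $2\leq\alpha\leq r+1$ and $2\leq\beta\leq s+1$.
   Context: Work in the first-order signature with one binary relation $\leq$; write $\vec{x}_k=(x_1,\ldots,x_k)$. For $1\leq k<\omega$: $J_k(\vec{x}_k,y)$ is a formula holding under $v$ iff $v(y)$ is the join of $\{v(x_1),\ldots,v(x_k)\}$, and $M_k(\vec{x}_k,y)$ iff $v(y)$ is their meet; $C_k(\vec{x}_k,y)=\bigvee_{i=1}^k(y=x_i)$ and $D_k=\neg C_k$; $C_{km}(\vec{x}_k,\vec{y}_m)$ holds iff $\{v(y_1),\ldots,v(y_m)\}\subseteq\{v(x_1),\ldots,v(x_k)\}$. Define $\sigma_k(\vec{x}_k,c)=\exists z(C_k(\vec{x}_k,z)\wedge z\leq c)$, $\tau_{kr}(\vec{x}_k,\vec{a}_r,c)=C_{kr}(\vec{x}_k,\vec{a}_r)\wedge M_r(\vec{a}_r,c)$, $\rho_{ks}(\vec{x}_k,\vec{b}_s)=\exists z(C_k(\vec{x}_k,z)\wedge J_s(\vec{b}_s,z))$. Define recursively $\phi_{krs0}(\vec{x}_k,y)=D_k(\vec{x}_k,y)$ and $\phi_{krs(n+1)}(\vec{x}_k,y)=\forall\vec{a}_r\forall\vec{b}_s\forall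 c\Big(\big(\sigma_k(\vec{x}_k,c)\to\phi_{(k+1)rsn}(\vec{x}_k,c,y)\big)\wedge\big(\tau_{kr}(\vec{x}_k,\vec{a}_r,c)\to\phi_{(k+1)rsn}(\vec{x}_k,c,y)\big)\wedge\big(\rho_{ks}(\vec{x}_k,\vec{b}_s)\to\bigvee_{i=1}^s\phi_{(k+1)rsn}(\vec{x}_k,b_i,y)\big)\Big)$. The $(\alpha,\beta)$-game on $P$ with starting position $(U_0,V)$ is played between $\forall$ and $\exists$ in rounds $0,1,2,\ldots$; a set $U$ is maintained, initially $U_0$, with $V$ fixed. Each round $\forall$ moves and $\exists$ responds: (1) if $b\geq a$ for some $a\in U$, $\forall$ may play $(b)$ and $\exists$ must add $b$ to $U$; (2) if $A\subseteq U$ with $|A|<\alpha$ and $\bigwedge A$ exists in $P$, $\forall$ may play $A$ and $\exists$ must add $\bigwedge A$ to $U$; (3) if $B\subseteq P$ with $|B|<\beta$ and $\bigvee B$ exists and lies in $U$, $\forall$ may play $B$ and $\exists$ must choose some $b\in B$ and add it to $U$. $\forall$ wins in round $n$ if $U\cap V\neq\emptyset$ at the beginning of round $n$. $\exists$ has an $n$-strategy if she can guarantee that $\forall$ does not win until at least round $n+1$. *)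

theory Defs
  imports Main
begin

text \<open>The poset P is modelled as a type of class order. Variables x_1..x_k are
  modelled by a function x :: nat => 'a (only the values at 1..k matter).\<close>

definition is_meet :: "'a::order set \<Rightarrow> 'a \<Rightarrow> bool" where
  "is_meet A m \<longleftrightarrow> (\<forall>a\<in>A. m \<le> a) \<and> (\<forall>z. (\<forall>a\<in>A. z \<le> a) \<longrightarrow> z \<le> m)"

definition is_join :: "'a::order set \<Rightarrow> 'a \<Rightarrow> bool" where
  "is_join B j \<longleftrightarrow> (\<forall>b\<in>B. b \<le> j) \<and> (\<forall>z. (\<forall>b\<in>B. b \<le> z) \<longrightarrow> j \<le> z)"

definition C_k :: "nat \<Rightarrow> (nat \<Rightarrow> 'a) \<Rightarrow> 'a \<Rightarrow> bool" where
  "C_k k x y \<longleftrightarrow> (\<exists>i\<in>{1..k}. y = x i)"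

definition D_k :: "nat \<Rightarrow> (nat \<Rightarrow> 'a) \<Rightarrow> 'a \<Rightarrow> bool" where
  "D_k k x y \<longleftrightarrow> \<not> C_k k x y"

definition C_km :: "nat \<Rightarrow> nat \<Rightarrow> (nat \<Rightarrow> 'a) \<Rightarrow> (nat \<Rightarrow> 'a) \<Rightarrow> bool" where
  "C_km k m x y \<longleftrightarrow> y ` {1..m} \<subseteq> x ` {1..k}"

definition M_k :: "nat \<Rightarrow> (nat \<Rightarrow> 'a::order) \<Rightarrow> 'a \<Rightarrow> bool" where
  "M_k k x y \<longleftrightarrow> is_meet (x ` {1..k}) y"

definition J_k :: "nat \<Rightarrow> (nat \<Rightarrow> 'a::order) \<Rightarrow> 'a \<Rightarrow> bool" where
  "J_k k x y \<longleftrightarrow> is_join (x ` {1..k}) y"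

definition sigma_k :: "nat \<Rightarrow> (nat \<Rightarrow> 'a::order) \<Rightarrow> 'a \<Rightarrow> bool" where
  "sigma_k k x c \<longleftrightarrow> (\<exists>z. C_k k x z \<and> z \<le> c)"

definition tau_kr :: "nat \<Rightarrow> nat \<Rightarrow> (nat \<Rightarrow> 'a::order) \<Rightarrow> (nat \<Rightarrow> 'a) \<Rightarrow> 'a \<Rightarrow> bool" where
  "tau_kr k r x a c \<longleftrightarrow> C_km k r x a \<and> M_k r a c"

definition rho_ks :: "nat \<Rightarrow> nat \<Rightarrow> (nat \<Rightarrow> 'a::order) \<Rightarrow> (nat \<Rightarrow> 'a) \<Rightarrow> bool" where
  "rho_ks k s x b \<longleftrightarrow> (\<exists>z. C_k k x z \<and> J_k s b z)"

text \<open>Satisfaction of phi_{krsn}(x_1..x_k, y): the tuple (x_1..x_k, c) is x(k+1 := c).\<close>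

fun phi :: "nat \<Rightarrow> nat \<Rightarrow> nat \<Rightarrow> nat \<Rightarrow> (nat \<Rightarrow> 'a::order) \<Rightarrow> 'a \<Rightarrow> bool" where
  "phi k r s 0 x y = D_k k x y"
| "phi k r s (Suc n) x y =
     (\<forall>a b c.
        (sigma_k k x c \<longrightarrow> phi (k+1) r s n (x(k+1 := c)) y) \<and>
        (tau_kr k r x a c \<longrightarrow> phi (k+1) r s n (x(k+1 := c)) y) \<and>
        (rho_ks k s x b \<longrightarrow> (\<exists>i\<in>{1..s}. phi (k+1) r s n (x(k+1 := b i)) y)))"

text \<open>If she cannot respond to a legal move she loses.\<close>

fun exists_strategy :: "nat \<Rightarrow> nat \<Rightarrow> nat \<Rightarrow> 'a::order set \<Rightarrow> 'a set \<Rightarrow> bool" where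
  "exists_strategy \<alpha> \<beta> 0 U V = (U \<inter> V = {})"
| "exists_strategy \<alpha> \<beta> (Suc n) U V =
     (U \<inter> V = {} \<and>
      (\<forall>a b. a \<in> U \<and> a \<le> b \<longrightarrow> exists_strategy \<alpha> \<beta> n (insert b U) V) \<and>
      (\<forall>A m. A \<subseteq> U \<and> finite A \<and> card A < \<alpha> \<and> is_meet A m
              \<longrightarrow> exists_strategy \<alpha> \<beta> n (insert m U) V) \<and>
      (\<forall>B j. finite B \<and> card B < \<beta> \<and> is_join B j \<and> j \<in> U
              \<longrightarrow> (\<exists>b\<in>B. exists_strategy \<alpha> \<beta> n (insert b U) V)))"

end

theory Submission
  imports Defs
begin

text \<open>One quantifier block of \<open>\<phi>\<close> offers \<forall>
  exactly the moves of one round of the (r+1, s+1)-game at position ({x_1..x_k}, {y}): the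
  tuples a and b enumerate all nonempty sets of at most r resp. s elements, and \<open>\<sigma>\<close> covers
  the upward moves as well as the degenerate moves with A or B empty (the meet of \<emptyset> is the
  top element, the join of \<emptyset> the bottom). By induction on n, \<open>\<phi>\<^sub>k\<^sub>r\<^sub>s\<^sub>n\<close> thus
  expresses an n-strategy in the (r+1, s+1)-game, and smaller \<alpha>, \<beta> only restrict \<forall>.\<close>

definition can_answer :: "nat \<Rightarrow> nat \<Rightarrow> 'a::order set \<Rightarrow> ('a \<Rightarrow> bool) \<Rightarrow> bool" where
  "can_answer \<alpha> \<beta> U P \<longleftrightarrow>
     (\<forall>a b. a \<in> U \<and> a \<le> b \<longrightarrow> P b) \<and>
     (\<forall>A m. A \<subseteq> U \<and> finite A \<and> card A < \<alpha> \<and> is_meet A m \<longrightarrow> P m) \<and>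
     (\<forall>B j. finite B \<and> card B < \<beta> \<and> is_join B j \<and> j \<in> U \<longrightarrow> (\<exists>b\<in>B. P b))"

lemma can_answer_upD: "can_answer \<alpha> \<beta> U P \<Longrightarrow> a \<in> U \<Longrightarrow> a \<le> b \<Longrightarrow> P b"
  by (simp add: can_answer_def)

lemma can_answer_meetD:
  "can_answer \<alpha> \<beta> U P \<Longrightarrow> A \<subseteq> U \<Longrightarrow> finite A \<Longrightarrow> card A < \<alpha> \<Longrightarrow> is_meet A m \<Longrightarrow> P m"
  by (simp add: can_answer_def)

lemma can_answer_joinD:
  "can_answer \<alpha> \<beta> U P \<Longrightarrow> finite B \<Longrightarrow> card B < \<beta> \<Longrightarrow> is_join B j \<Longrightarrow> j \<in> U \<Longrightarrow> \<exists>b\<in>B. P b"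
  unfolding can_answer_def by blast

lemma exists_strategy_Suc_iff:
  "exists_strategy \<alpha> \<beta> (Suc n) U V \<longleftrightarrow>
     U \<inter> V = {} \<and> can_answer \<alpha> \<beta> U (\<lambda>c. exists_strategy \<alpha> \<beta> n (insert c U) V)"
  by (simp add: can_answer_def)

lemma exists_strategy_disjoint: "exists_strategy \<alpha> \<beta> n U V \<Longrightarrow> U \<inter> V = {}"
  by (cases n) auto

lemma can_answer_mono:
  assumes "can_answer \<alpha> \<beta> U P" "\<alpha>' \<le> \<alpha>" "\<beta>' \<le> \<beta>" "\<And>c. P c \<Longrightarrow> Q c"
  shows "can_answer \<alpha>' \<beta>' U Q"
  using assms unfolding can_answer_def by (meson order_less_le_trans)

lemma exists_strategy_mono:
  "exists_strategy \<alpha> \<beta> n U V \<Longrightarrow> \<alpha>' \<le> \<alpha> \<Longrightarrow> \<beta>' \<le> \<beta> \<Longrightarrow> exists_strategy \<alpha>' \<beta>' n U V"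
proof (induction n arbitrary: U)
  case 0
  then show ?case by simp
next
  case (Suc n)
  then have "can_answer \<alpha> \<beta> U (\<lambda>c. exists_strategy \<alpha> \<beta> n (insert c U) V)"
    by (simp only: exists_strategy_Suc_iff)
  then have "can_answer \<alpha>' \<beta>' U (\<lambda>c. exists_strategy \<alpha>' \<beta>' n (insert c U) V)"
    by (rule can_answer_mono) (use Suc in auto)
  then show ?case
    using Suc.prems(1) by (simp only: exists_strategy_Suc_iff)
qed

lemma ex_image_atLeastAtMost_eq:
  assumes "finite A" "A \<noteq> {}" "card A \<le> r"
  shows "\<exists>a :: nat \<Rightarrow> 'a. a ` {1..r} = A"
proof -
  obtain h where h: "bij_betw h {1..card A} A"
    using ex_bij_betw_nat_finite_1[OF assms(1)] by blast
  have "card A \<ge> 1"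
    using assms(1,2) by (simp add: Suc_leI card_gt_0_iff)
  then have "(\<lambda>i. min i (card A)) ` {1..r} = {1..card A}"
    using assms(3) by (force simp: image_iff)
  then have "h ` (\<lambda>i. min i (card A)) ` {1..r} = A"
    using h by (simp add: bij_betw_def)
  then show ?thesis
    by (metis image_comp)
qed

lemma image_fun_upd_atLeastAtMost_Suc:
  "(x(Suc k := c)) ` {1..Suc k} = insert c (x ` {1..k})"
proof -
  have "{1..Suc k} = insert (Suc k) {1..k}"
    by auto
  then show ?thesis
    by auto
qed

lemma C_k_iff: "C_k k x z \<longleftrightarrow> z \<in> x ` {1..k}"
  by (auto simp: C_k_def)

lemma sigma_k_iff: "sigma_k k x c \<longleftrightarrow> (\<exists>z\<in>x ` {1..k}. z \<le> c)"
  by (auto simp: sigma_k_def C_k_iff)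

lemma tau_kr_iff: "tau_kr k r x a c \<longleftrightarrow> a ` {1..r} \<subseteq> x ` {1..k} \<and> is_meet (a ` {1..r}) c"
  by (simp add: tau_kr_def C_km_def M_k_def)

lemma rho_ks_iff: "rho_ks k s x b \<longleftrightarrow> (\<exists>z\<in>x ` {1..k}. is_join (b ` {1..s}) z)"
  by (auto simp: rho_ks_def J_k_def C_k_iff)

lemma phi_imp_notin: "phi k r s n x y \<Longrightarrow> y \<notin> x ` {1..k}"
proof (induction n arbitrary: k x)
  case 0
  then show ?case by (simp add: D_k_def C_k_iff)
next
  case (Suc n)
  show ?case
  proof
    assume "y \<in> x ` {1..k}"
    then have "phi (Suc k) r s n (x(Suc k := y)) y"
      using Suc.prems by (auto simp: sigma_k_iff)
    moreover have "y \<in> (x(Suc k := y)) ` {1..Suc k}"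
      by auto
    ultimately show False
      using Suc.IH by blast
  qed
qed

lemma phi_Suc_iff:
  fixes x :: "nat \<Rightarrow> 'a::order"
  assumes "1 \<le> k"
  shows "phi k r s (Suc n) x y \<longleftrightarrow>
    can_answer (Suc r) (Suc s) (x ` {1..k}) (\<lambda>c. phi (Suc k) r s n (x(Suc k := c)) y)"
    (is "_ \<longleftrightarrow> can_answer _ _ ?X ?P")
proof
  assume "phi k r s (Suc n) x y"
  then have sigma: "\<And>c. sigma_k k x c \<Longrightarrow> ?P c"
    and tau: "\<And>a c. tau_kr k r x a c \<Longrightarrow> ?P c"
    and rho: "\<And>b. rho_ks k s x b \<Longrightarrow> \<exists>i\<in>{1..s}. ?P (b i)"
    unfolding phi.simps Suc_eq_plus1 [symmetric] by blast+
  have up: "?P c" if "z \<in> ?X" "z \<le> c" for z c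
    using that sigma by (auto simp: sigma_k_iff)
  show "can_answer (Suc r) (Suc s) ?X ?P"
    unfolding can_answer_def
  proof (intro conjI allI impI)
    fix a b
    assume "a \<in> ?X \<and> a \<le> b"
    then show "?P b" using up by blast
  next
    fix A m
    assume A: "A \<subseteq> ?X \<and> finite A \<and> card A < Suc r \<and> is_meet A m"
    show "?P m"
    proof (cases "A = {}")
      case True
      then have "x 1 \<le> m" using A by (simp add: is_meet_def)
      then show ?thesis using up[of "x 1" m] assms by simp
    next
      case False
      then obtain a where "a ` {1..r} = A"
        using A ex_image_atLeastAtMost_eq[of A r] by auto
      then show ?thesis
        using A tau by (auto simp: tau_kr_iff)
    qed
  next
    fix B j
    assume B: "finite B \<and> card B < Suc s \<and> is_join B j \<and> j \<in> ?X"
    show "\<exists>b\<in>B. ?P b"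
    proof (cases "B = {}")
      case True
      \<comment> \<open>j is then the least element, so \<open>\<sigma>\<close> already lets \<forall> add y\<close>
      then have "?P y" using B up by (auto simp: is_join_def)
      then show ?thesis
        using phi_imp_notin by (fastforce simp: image_fun_upd_atLeastAtMost_Suc)
    next
      case False
      then obtain b where "b ` {1..s} = B"
        using B ex_image_atLeastAtMost_eq[of B s] by auto
      then have "rho_ks k s x b"
        using B by (auto simp: rho_ks_iff)
      then have "\<exists>i\<in>{1..s}. ?P (b i)"
        by (rule rho)
      then show ?thesis
        using \<open>b ` {1..s} = B\<close> by blast
    qed
  qed
next
  assume ans: "can_answer (Suc r) (Suc s) ?X ?P"
  have card_image_less: "card (f ` {1..m}) < Suc m" for f :: "nat \<Rightarrow> 'a" and m
    using card_image_le[of "{1..m}" f] by simp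
  show "phi k r s (Suc n) x y"
    unfolding phi.simps Suc_eq_plus1 [symmetric]
  proof (intro allI conjI impI)
    fix c
    assume "sigma_k k x c"
    then show "?P c"
      using can_answer_upD[OF ans] by (auto simp: sigma_k_iff)
  next
    fix a c
    assume "tau_kr k r x a c"
    then show "?P c"
      using can_answer_meetD[OF ans, of "a ` {1..r}" c] card_image_less[of a r] by (simp add: tau_kr_iff)
  next
    fix b
    assume "rho_ks k s x b"
    then obtain j where "j \<in> ?X" "is_join (b ` {1..s}) j"
      by (auto simp: rho_ks_iff)
    then have "\<exists>w\<in>b ` {1..s}. ?P w"
      using can_answer_joinD[OF ans] card_image_less by blast
    then show "\<exists>i\<in>{1..s}. ?P (b i)"
      by blast
  qed
qed

lemma phi_iff_exists_strategy:
  assumes "1 \<le> k"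
  shows "phi k r s n x y \<longleftrightarrow> exists_strategy (Suc r) (Suc s) n (x ` {1..k}) {y}"
  using assms
proof (induction n arbitrary: k x)
  case 0
  then show ?case by (auto simp: D_k_def C_k_iff)
next
  case (Suc n)
  let ?X = "x ` {1..k}" and ?E = "exists_strategy (Suc r) (Suc s) n"
  have IH: "phi (Suc k) r s n (x(Suc k := c)) y \<longleftrightarrow> ?E (insert c ?X) {y}" for c
  proof -
    have "phi (Suc k) r s n (x(Suc k := c)) y \<longleftrightarrow> ?E ((x(Suc k := c)) ` {1..Suc k}) {y}"
      by (rule Suc.IH) simp
    then show ?thesis
      by (simp only: image_fun_upd_atLeastAtMost_Suc)
  qed
  have "phi k r s (Suc n) x y \<longleftrightarrow> can_answer (Suc r) (Suc s) ?X (\<lambda>c. ?E (insert c ?X) {y})"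
    by (simp only: phi_Suc_iff[OF Suc.prems] IH)
  moreover have "y \<notin> ?X" if "can_answer (Suc r) (Suc s) ?X (\<lambda>c. ?E (insert c ?X) {y})"
    using can_answer_upD[OF that, of y y] exists_strategy_disjoint by blast
  ultimately show ?case
    unfolding exists_strategy_Suc_iff by blast
qed

theorem lemma5p3:
  fixes x :: "nat \<Rightarrow> 'a::order" and y :: 'a and k r s n :: nat
  assumes "1 \<le> k" and "1 \<le> r" and "1 \<le> s"
  shows "phi k r s n x y \<longleftrightarrow>
    (\<forall>\<alpha> \<beta>. 2 \<le> \<alpha> \<and> \<alpha> \<le> r + 1 \<and> 2 \<le> \<beta> \<and> \<beta> \<le> s + 1 \<longrightarrow>
        exists_strategy \<alpha> \<beta> n (x ` {1..k}) {y})"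
  using phi_iff_exists_strategy[OF assms(1)] exists_strategy_mono assms(2,3) by fastforce

end
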